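(* Let $(x_1,\dots,x_n)\in[c]^n$ be any token sequence. Suppose $\mathcal V=\{\boldsymbol v_k\}_{k=1}^n\in(\mathbb R^d)^n$ is a good sequence converging to $\mathcal Z=\{\boldsymbol z_x\}_{x\in[c]}$ with parameter $\gamma$, and $\boldsymbol A=\{a_{k,j}\}_{k,j\in[n]}$ is a nice attention map with parameter $\psi$ that reflects a function $f:[c]\to[c]$ in the sense that for all $k,j\in[n]$, $a_{k,j}>0$ implies $x_j=f(x_k)$. Then $\boldsymbol A\mathcal V$ is a good sequence converging to $\mathcal Z'=\{\boldsymbol z_{f(x)}\}_{x\in[c]}$ with parameter $2\gamma\psi+c(\gamma+2N)$, where $N=\max_{x\in[c]}\|\boldsymbol z_x\|$.
   Context: Good sequence (relative to the token sequence): $\{\boldsymbol u_k\}_{k=1}^n\subset\mathbb R^d$ is a good sequence converging to $\{\boldsymbol z_x\}_{x\in[c]}$ with parameter $\gamma>0$ if $\|\boldsymbol u_k-\boldsymbol z_{x_k}\|\le\gamma/\sqrt k$ for all $k\in[n]$ (Euclidean norm). Attention map: $\boldsymbol A\in\mathbb R_{\ge0}^{n\times n}$ with $a_{k,j}=0$ for $j>k$ and $\sum_{j=1}^ka_{k,j}=1$ for all $k$; nice with parameter $\psi>0$ if $\sum_{i=1}^ja_{k,i}\le\psi j/k$ for all $k\in[n]$, $j\in[k]$. $\boldsymbol A\mathcal V=\{\sum_{j=1}^na_{k,j}\boldsymbol v_j\}_{k=1}^n$. *)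

theory Defs
  imports "HOL-Analysis.Analysis"
begin

text \<open>Sequences are indexed by 1..n, tokens take values in [c] = {1..c}.\<close>

definition good_seq ::
  "nat \<Rightarrow> (nat \<Rightarrow> nat) \<Rightarrow> (nat \<Rightarrow> 'a::real_normed_vector) \<Rightarrow> (nat \<Rightarrow> 'a) \<Rightarrow> real \<Rightarrow> bool" where
  "good_seq n x u z \<gamma> \<longleftrightarrow> \<gamma> > 0 \<and>
     (\<forall>k\<in>{1..n}. norm (u k - z (x k)) \<le> \<gamma> / sqrt (real k))"

definition attention_map :: "nat \<Rightarrow> (nat \<Rightarrow> nat \<Rightarrow> real) \<Rightarrow> bool" where
  "attention_map n A \<longleftrightarrow>
     (\<forall>k\<in>{1..n}. \<forall>j\<in>{1..n}. A k j \<ge> 0) \<and>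
     (\<forall>k\<in>{1..n}. \<forall>j\<in>{1..n}. j > k \<longrightarrow> A k j = 0) \<and>
     (\<forall>k\<in>{1..n}. (\<Sum>j=1..k. A k j) = 1)"

definition nice_attention :: "nat \<Rightarrow> (nat \<Rightarrow> nat \<Rightarrow> real) \<Rightarrow> real \<Rightarrow> bool" where
  "nice_attention n A \<psi> \<longleftrightarrow> attention_map n A \<and> \<psi> > 0 \<and>
     (\<forall>k\<in>{1..n}. \<forall>j\<in>{1..k}. (\<Sum>i=1..j. A k i) \<le> \<psi> * real j / real k)"

definition apply_attention ::
  "nat \<Rightarrow> (nat \<Rightarrow> nat \<Rightarrow> real) \<Rightarrow> (nat \<Rightarrow> 'a::real_vector) \<Rightarrow> nat \<Rightarrow> 'a" where
  "apply_attention n A v k = (\<Sum>j=1..n. A k j *\<^sub>R v j)"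

end

theory Submission
  imports Defs
begin

text \<open>
  Every position attended to from \<open>k\<close> carries the token \<open>f (x k)\<close>, so, the weights of row
  \<open>k\<close> summing to 1, \<open>(A V) k - z (f (x k)) = \<Sum>j. a k j (v j - z (x j))\<close>, whose norm is at most
  \<open>\<gamma> \<Sum>j. a k j / sqrt j\<close>. As \<open>1 / sqrt j\<close> decreases, summation by parts shows that among
  weights with partial sums at most \<open>\<psi> j / k\<close> this sum is largest for the uniform weights
  \<open>\<psi> / k\<close>, and \<open>\<Sum>j\<le>k. 1 / sqrt j \<le> 2 sqrt k\<close> gives the bound \<open>2 \<gamma> \<psi> / sqrt k\<close>.
\<close>

lemma sum_by_parts:
  fixes a w :: "nat \<Rightarrow> 'a::comm_ring"
  shows "(\<Sum>j=1..m. a j * w j) =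
    (\<Sum>j=1..m. (\<Sum>i=1..j. a i) * (w j - w (Suc j))) + (\<Sum>i=1..m. a i) * w (Suc m)"
  by (induction m) (simp_all add: algebra_simps)

lemma sum_mult_le_by_partial_sums:
  fixes a b w :: "nat \<Rightarrow> 'a::linordered_idom"
  assumes partial_le: "\<And>j. j \<in> {1..m} \<Longrightarrow> (\<Sum>i=1..j. a i) \<le> (\<Sum>i=1..j. b i)"
    and antimono: "\<And>j. j \<in> {1..m} \<Longrightarrow> w (Suc j) \<le> w j"
    and nonneg: "w (Suc m) \<ge> 0"
  shows "(\<Sum>j=1..m. a j * w j) \<le> (\<Sum>j=1..m. b j * w j)"
proof (cases "m = 0")
  case False
  have "(\<Sum>j=1..m. (\<Sum>i=1..j. a i) * (w j - w (Suc j)))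
      \<le> (\<Sum>j=1..m. (\<Sum>i=1..j. b i) * (w j - w (Suc j)))"
    using partial_le antimono by (intro sum_mono[OF mult_right_mono]) auto
  moreover have "(\<Sum>i=1..m. a i) * w (Suc m) \<le> (\<Sum>i=1..m. b i) * w (Suc m)"
    using partial_le[of m] nonneg False by (intro mult_right_mono) auto
  ultimately show ?thesis
    by (simp only: sum_by_parts[of a w m] sum_by_parts[of b w m])
qed simp

lemma inverse_sqrt_le_twice_sqrt_diff:
  "1 / sqrt (real k + 1) \<le> 2 * (sqrt (real k + 1) - sqrt (real k))"
proof -
  have "1 / sqrt (real k + 1) = 2 / (2 * sqrt (real k + 1))"
    by simp
  also have "\<dots> \<le> 2 / (sqrt (real k + 1) + sqrt (real k))"
    by (rule divide_left_mono) (simp_all add: add_pos_nonneg)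
  also have "\<dots> = 2 * (sqrt (real k + 1) - sqrt (real k))"
  proof -
    have "(sqrt (real k + 1) - sqrt (real k)) * (sqrt (real k + 1) + sqrt (real k)) = 1"
      by (simp add: algebra_simps)
    moreover have "sqrt (real k + 1) + sqrt (real k) > 0"
      by (simp add: add_pos_nonneg)
    ultimately have "sqrt (real k + 1) - sqrt (real k) = 1 / (sqrt (real k + 1) + sqrt (real k))"
      by (simp add: eq_divide_eq)
    then show ?thesis
      by simp
  qed
  finally show ?thesis .
qed

lemma sum_inverse_sqrt_le: "(\<Sum>j=1..k. 1 / sqrt (real j)) \<le> 2 * sqrt (real k)"
proof (induction k)
  case (Suc k)
  then show ?case
    using inverse_sqrt_le_twice_sqrt_diff[of k] by (simp add: add.commute)
qed simp

lemma good_seq_mono: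
  assumes "good_seq n x u z \<gamma>" and "\<gamma> \<le> \<gamma>'"
  shows "good_seq n x u z \<gamma>'"
  using assms unfolding good_seq_def
  by (smt (verit) divide_right_mono of_nat_0_le_iff real_sqrt_ge_zero)

lemma attention_map_sum_row_prefix:
  fixes g :: "nat \<Rightarrow> 'a::real_vector"
  assumes "attention_map n A" and "k \<in> {1..n}"
  shows "(\<Sum>j=1..n. A k j *\<^sub>R g j) = (\<Sum>j=1..k. A k j *\<^sub>R g j)"
proof -
  have "{1..n} = {1..k} \<union> {k+1..n}"
    using assms(2) by auto
  moreover have "(\<Sum>j=k+1..n. A k j *\<^sub>R g j) = 0"
    using assms unfolding attention_map_def by (intro sum.neutral) auto
  ultimately show ?thesis
    by (simp add: sum.union_disjoint)
qed

lemma attention_map_row_sum: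
  assumes "attention_map n A" and "k \<in> {1..n}"
  shows "(\<Sum>j=1..n. A k j) = 1"
  using attention_map_sum_row_prefix[OF assms, of "\<lambda>_. 1 :: real"] assms
  unfolding attention_map_def by simp

lemma apply_attention_minus_reflected:
  assumes A: "attention_map n A" and k: "k \<in> {1..n}"
    and reflects: "\<And>j. j \<in> {1..n} \<Longrightarrow> A k j > 0 \<Longrightarrow> x j = f (x k)"
  shows "apply_attention n A v k - z (f (x k)) = (\<Sum>j=1..n. A k j *\<^sub>R (v j - z (x j)))"
proof -
  have "z (f (x k)) = (\<Sum>j=1..n. A k j *\<^sub>R z (f (x k)))"
    using attention_map_row_sum[OF A k] by (simp add: scaleR_sum_left[symmetric])
  also have "\<dots> = (\<Sum>j=1..n. A k j *\<^sub>R z (x j))"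
  proof (rule sum.cong)
    fix j assume j: "j \<in> {1..n}"
    have "A k j \<ge> 0"
      using A k j unfolding attention_map_def by auto
    then show "A k j *\<^sub>R z (f (x k)) = A k j *\<^sub>R z (x j)"
      using reflects[OF j] by (cases "A k j = 0") auto
  qed simp
  finally show ?thesis
    unfolding apply_attention_def by (simp add: scaleR_diff_right sum_subtractf)
qed

lemma nice_attention_sum_inverse_sqrt_le:
  assumes nice: "nice_attention n A \<psi>" and k: "k \<in> {1..n}"
  shows "(\<Sum>j=1..n. A k j / sqrt (real j)) \<le> 2 * \<psi> / sqrt (real k)"
proof -
  have A: "attention_map n A"
    using nice unfolding nice_attention_def by simp
  have k_pos: "real k > 0"
    using k by simp
  have "(\<Sum>j=1..n. A k j / sqrt (real j)) = (\<Sum>j=1..k. A k j * (1 / sqrt (real j)))"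
    using attention_map_sum_row_prefix[OF A k, of "\<lambda>j. 1 / sqrt (real j)"] by simp
  also have "\<dots> \<le> (\<Sum>j=1..k. \<psi> / real k * (1 / sqrt (real j)))"
  proof (rule sum_mult_le_by_partial_sums)
    show "(\<Sum>i=1..j. A k i) \<le> (\<Sum>i=1..j. \<psi> / real k)" if "j \<in> {1..k}" for j
      using nice k that unfolding nice_attention_def by (auto simp: mult.commute)
    show "1 / sqrt (real (Suc j)) \<le> 1 / sqrt (real j)" if "j \<in> {1..k}" for j
      using that by (auto intro!: divide_left_mono)
  qed simp
  also have "\<dots> = \<psi> / real k * (\<Sum>j=1..k. 1 / sqrt (real j))"
    by (simp add: sum_distrib_left)
  also have "\<dots> \<le> \<psi> / real k * (2 * sqrt (real k))"
    using nice sum_inverse_sqrt_le[of k] unfolding nice_attention_def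
    by (intro mult_left_mono) auto
  also have "\<dots> = 2 * \<psi> / sqrt (real k)"
    using k_pos by (simp add: field_simps)
  finally show ?thesis .
qed

lemma norm_apply_attention_reflected_le:
  fixes v z :: "nat \<Rightarrow> 'a::real_normed_vector"
  assumes good: "good_seq n x v z \<gamma>" and nice: "nice_attention n A \<psi>" and k: "k \<in> {1..n}"
    and reflects: "\<And>j. j \<in> {1..n} \<Longrightarrow> A k j > 0 \<Longrightarrow> x j = f (x k)"
  shows "norm (apply_attention n A v k - z (f (x k))) \<le> 2 * \<gamma> * \<psi> / sqrt (real k)"
proof -
  have A: "attention_map n A"
    using nice unfolding nice_attention_def by simp
  have A_nonneg: "A k j \<ge> 0" if "j \<in> {1..n}" for j
    using A k that unfolding attention_map_def by auto
  have diff: "apply_attention n A v k - z (f (x k)) = (\<Sum>j=1..n. A k j *\<^sub>R (v j - z (x j)))"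
    using A k reflects by (rule apply_attention_minus_reflected)
  have "norm (apply_attention n A v k - z (f (x k))) \<le> (\<Sum>j=1..n. norm (A k j *\<^sub>R (v j - z (x j))))"
    unfolding diff by (rule norm_sum)
  also have "\<dots> \<le> (\<Sum>j=1..n. \<gamma> * (A k j / sqrt (real j)))"
  proof (rule sum_mono)
    fix j assume j: "j \<in> {1..n}"
    have "A k j * norm (v j - z (x j)) \<le> A k j * (\<gamma> / sqrt (real j))"
      using good j A_nonneg[OF j] unfolding good_seq_def by (intro mult_left_mono) auto
    then show "norm (A k j *\<^sub>R (v j - z (x j))) \<le> \<gamma> * (A k j / sqrt (real j))"
      using A_nonneg[OF j] by (simp add: mult.commute)
  qed
  also have "\<dots> = \<gamma> * (\<Sum>j=1..n. A k j / sqrt (real j))"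
    by (simp add: sum_distrib_left)
  also have "\<dots> \<le> \<gamma> * (2 * \<psi> / sqrt (real k))"
    using good nice_attention_sum_inverse_sqrt_le[OF nice k] unfolding good_seq_def
    by (intro mult_left_mono) auto
  finally show ?thesis
    by (simp add: mult.assoc mult.left_commute)
qed

theorem theorem4:
  fixes n c :: nat and x f :: "nat \<Rightarrow> nat"
    and v z :: "nat \<Rightarrow> 'a::euclidean_space"
    and A :: "nat \<Rightarrow> nat \<Rightarrow> real" and \<gamma> \<psi> :: real
  assumes "c \<ge> 1"
    and tokens: "\<forall>k\<in>{1..n}. x k \<in> {1..c}"
    and f_range: "\<forall>y\<in>{1..c}. f y \<in> {1..c}"
    and good: "good_seq n x v z \<gamma>"
    and nice: "nice_attention n A \<psi>"
    and reflects: "\<forall>k\<in>{1..n}. \<forall>j\<in>{1..n}. A k j > 0 \<longrightarrow> x j = f (x k)"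
  shows "good_seq n x (apply_attention n A v) (\<lambda>y. z (f y))
           (2 * \<gamma> * \<psi> + real c * (\<gamma> + 2 * Max ((\<lambda>y. norm (z y)) ` {1..c})))"
proof (rule good_seq_mono)
  show "good_seq n x (apply_attention n A v) (\<lambda>y. z (f y)) (2 * \<gamma> * \<psi>)"
    using good nice reflects norm_apply_attention_reflected_le[OF good nice]
    unfolding good_seq_def nice_attention_def by auto
  have "0 \<le> norm (z 1)"
    by simp
  also have "\<dots> \<le> Max ((\<lambda>y. norm (z y)) ` {1..c})"
    using \<open>c \<ge> 1\<close> by (intro Max_ge) auto
  finally show "2 * \<gamma> * \<psi> \<le> 2 * \<gamma> * \<psi> + real c * (\<gamma> + 2 * Max ((\<lambda>y. norm (z y)) ` {1..c}))"
    using good unfolding good_seq_def by simp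
qed

end
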